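(* Every finite field extension $K$ of a Brauer field $k$ is a Brauer field.
   Context: A field $k$ is a Brauer field if for every $d\ge 1$ there is a number $N_k(d)$ such that every equation $a_1x_1^d+\cdots+a_nx_n^d=0$ with $n>N_k(d)$ and $a_i\in k$ has a non-trivial solution in $k^n$. *)

theory Defs
  imports Main
begin

definition brauer_field :: "'k::field itself \<Rightarrow> bool" where
  "brauer_field _ \<longleftrightarrow>
     (\<forall>d::nat. d \<ge> 1 \<longrightarrow>
        (\<exists>N::nat. \<forall>n > N. \<forall>a :: nat \<Rightarrow> 'k.
            \<exists>x :: nat \<Rightarrow> 'k. (\<exists>i<n. x i \<noteq> 0) \<and> (\<Sum>i<n. a i * x i ^ d) = 0))"

text \<open>A field homomorphism (automatically injective), making K an extension of k.\<close>
definition field_hom :: "('k::field \<Rightarrow> 'K::field) \<Rightarrow> bool" where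
  "field_hom f \<longleftrightarrow> f 1 = 1 \<and> (\<forall>x y. f (x + y) = f x + f y) \<and> (\<forall>x y. f (x * y) = f x * f y)"

text \<open>K is a finite extension of k via f: K is finitely generated (hence finite-dimensional)
  as a vector space over k, with scalar multiplication c \<cdot> v = f c * v.\<close>
definition finite_extension :: "('k::field \<Rightarrow> 'K::field) \<Rightarrow> bool" where
  "finite_extension f \<longleftrightarrow> field_hom f \<and>
     (\<exists>B :: 'K set. finite B \<and> (\<forall>v :: 'K. \<exists>c :: 'K \<Rightarrow> 'k. v = (\<Sum>b\<in>B. f (c b) * b)))"

end

theory Submission
  imports Defs
begin

text \<open>Over a Brauer field k, any finite system of diagonal forms of degree d in
  sufficiently many variables has a common non-trivial zero: split the variables into p blocks of
  L variables, solve the first form on every block, and substitute the block solutions scaled by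
  new unknowns u_q into the remaining forms, which become a smaller system in the p unknowns u_q^d.
  Given a finite extension K of k with spanning set B, expanding the coefficients of a form over K
  in B turns the search for a zero with entries in k into a system of |B| diagonal forms over k.\<close>

definition diag_systems_solvable :: "'k::field itself \<Rightarrow> nat \<Rightarrow> 'j set \<Rightarrow> nat \<Rightarrow> bool" where
  "diag_systems_solvable _ d J n \<longleftrightarrow>
     (\<forall>b :: 'j \<Rightarrow> nat \<Rightarrow> 'k. \<exists>x. (\<exists>i<n. x i \<noteq> 0) \<and> (\<forall>j\<in>J. (\<Sum>i<n. b j i * x i ^ d) = 0))"

lemma diag_systems_solvable_empty: "n > 0 \<Longrightarrow> diag_systems_solvable TYPE('k::field) d {} n"
  unfolding diag_systems_solvable_def by (auto intro!: exI[of _ "\<lambda>_. 1"])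

lemma diag_systems_solvable_mono:
  fixes J :: "'j set"
  assumes sol: "diag_systems_solvable TYPE('k::field) d J m" and "d \<ge> 1" and "m \<le> n"
  shows "diag_systems_solvable TYPE('k) d J n"
  unfolding diag_systems_solvable_def
proof
  fix b :: "'j \<Rightarrow> nat \<Rightarrow> 'k"
  from sol obtain x where nz: "\<exists>i<m. x i \<noteq> 0" and zero: "\<forall>j\<in>J. (\<Sum>i<m. b j i * x i ^ d) = 0"
    unfolding diag_systems_solvable_def by blast
  define y where "y i = (if i < m then x i else 0)" for i
  have "(\<Sum>i<n. b j i * y i ^ d) = (\<Sum>i<m. b j i * x i ^ d)" for j
    using assms by (intro sum.mono_neutral_cong_right) (auto simp: y_def)
  then show "\<exists>y. (\<exists>i<n. y i \<noteq> 0) \<and> (\<forall>j\<in>J. (\<Sum>i<n. b j i * y i ^ d) = 0)"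
    using nz zero \<open>m \<le> n\<close> by (intro exI[of _ y]) (auto simp: y_def)
qed

lemma diag_systems_solvable_singleton_iff:
  fixes j :: 'j
  shows "diag_systems_solvable TYPE('k::field) d {j} n \<longleftrightarrow>
     (\<forall>a :: nat \<Rightarrow> 'k. \<exists>x. (\<exists>i<n. x i \<noteq> 0) \<and> (\<Sum>i<n. a i * x i ^ d) = 0)"
  unfolding diag_systems_solvable_def
proof (intro iffI allI)
  fix a :: "nat \<Rightarrow> 'k"
  assume "\<forall>b :: 'j \<Rightarrow> nat \<Rightarrow> 'k. \<exists>x. (\<exists>i<n. x i \<noteq> 0) \<and> (\<forall>j\<in>{j}. (\<Sum>i<n. b j i * x i ^ d) = 0)"
  then show "\<exists>x. (\<exists>i<n. x i \<noteq> 0) \<and> (\<Sum>i<n. a i * x i ^ d) = 0"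
    by (elim allE[of _ "\<lambda>_. a"]) simp
next
  fix b :: "'j \<Rightarrow> nat \<Rightarrow> 'k"
  assume "\<forall>a :: nat \<Rightarrow> 'k. \<exists>x. (\<exists>i<n. x i \<noteq> 0) \<and> (\<Sum>i<n. a i * x i ^ d) = 0"
  then show "\<exists>x. (\<exists>i<n. x i \<noteq> 0) \<and> (\<forall>j\<in>{j}. (\<Sum>i<n. b j i * x i ^ d) = 0)"
    by (elim allE[of _ "b j"]) simp
qed

lemma brauer_field_iff_diag_systems_solvable_singleton:
  "brauer_field TYPE('k::field) \<longleftrightarrow>
     (\<forall>d \<ge> 1. \<exists>N. \<forall>n>N. diag_systems_solvable TYPE('k) d {j} n)"
  unfolding brauer_field_def diag_systems_solvable_singleton_iff ..

lemma sum_lessThan_mult_blocks: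
  fixes g :: "nat \<Rightarrow> 'a::comm_monoid_add"
  shows "(\<Sum>i<p * L. g i) = (\<Sum>q<p. \<Sum>k<L. g (q * L + k))"
proof -
  have "(\<Sum>i<p * L. g i) = (\<Sum>q<p. sum g {q * L..<q * L + L})"
    by (rule sum.nat_group[symmetric])
  also have "\<dots> = (\<Sum>q<p. \<Sum>k<L. g (q * L + k))"
  proof (rule sum.cong[OF refl])
    fix q
    have "sum g {0 + q * L..<L + q * L} = (\<Sum>k\<in>{0..<L}. g (k + q * L))"
      by (rule sum.shift_bounds_nat_ivl)
    then show "sum g {q * L..<q * L + L} = (\<Sum>k<L. g (q * L + k))"
      by (simp add: add.commute atLeast0LessThan)
  qed
  finally show ?thesis .
qed

lemma diag_systems_solvable_union:
  fixes J1 J2 :: "'j set"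
  assumes sol1: "diag_systems_solvable TYPE('k::field) d J1 L"
    and sol2: "diag_systems_solvable TYPE('k) d J2 p"
  shows "diag_systems_solvable TYPE('k) d (J1 \<union> J2) (p * L)"
  unfolding diag_systems_solvable_def
proof
  fix b :: "'j \<Rightarrow> nat \<Rightarrow> 'k"
  have "\<exists>s. (\<exists>k<L. s k \<noteq> 0) \<and> (\<forall>j\<in>J1. (\<Sum>k<L. b j (q * L + k) * s k ^ d) = 0)" for q
    using sol1 unfolding diag_systems_solvable_def by (elim allE[of _ "\<lambda>j k. b j (q * L + k)"])
  then obtain s where s_nz: "\<And>q. \<exists>k<L. s q k \<noteq> 0"
    and s_zero: "\<And>q j. j \<in> J1 \<Longrightarrow> (\<Sum>k<L. b j (q * L + k) * s q k ^ d) = 0"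
    by metis
  define c where "c j q = (\<Sum>k<L. b j (q * L + k) * s q k ^ d)" for j q
  obtain u where u_nz: "\<exists>q<p. u q \<noteq> 0" and u_zero: "\<And>j. j \<in> J2 \<Longrightarrow> (\<Sum>q<p. c j q * u q ^ d) = 0"
    using sol2 unfolding diag_systems_solvable_def by blast
  define x where "x i = s (i div L) (i mod L) * u (i div L)" for i
  have x_block: "x (q * L + k) = s q k * u q" if "k < L" for q k
  proof -
    have "(q * L + k) div L = q" and "(q * L + k) mod L = k"
      using that by auto
    then show ?thesis by (simp add: x_def)
  qed
  have block_lt: "q * L + k < p * L" if "q < p" "k < L" for q k
  proof -
    have "Suc q * L \<le> p * L" using that by (intro mult_le_mono1) auto
    then show ?thesis using that by simp
  qed
  have form_eq: "(\<Sum>i<p * L. b j i * x i ^ d) = (\<Sum>q<p. c j q * u q ^ d)" for j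
  proof -
    have "(\<Sum>i<p * L. b j i * x i ^ d) = (\<Sum>q<p. \<Sum>k<L. b j (q * L + k) * x (q * L + k) ^ d)"
      by (rule sum_lessThan_mult_blocks)
    also have "\<dots> = (\<Sum>q<p. \<Sum>k<L. b j (q * L + k) * s q k ^ d * u q ^ d)"
      by (intro sum.cong refl) (simp add: x_block power_mult_distrib mult.assoc)
    also have "\<dots> = (\<Sum>q<p. c j q * u q ^ d)"
      by (simp add: c_def sum_distrib_right)
    finally show ?thesis .
  qed
  from u_nz obtain q where "q < p" "u q \<noteq> 0" by blast
  moreover from s_nz obtain k where "k < L" "s q k \<noteq> 0" by blast
  ultimately have "x (q * L + k) \<noteq> 0" and "q * L + k < p * L"
    using block_lt x_block by auto
  moreover have "(\<Sum>i<p * L. b j i * x i ^ d) = 0" if "j \<in> J1 \<union> J2" for j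
    using that
  proof
    assume "j \<in> J1"
    then show ?thesis by (simp add: form_eq c_def s_zero)
  next
    assume "j \<in> J2"
    then show ?thesis by (simp add: form_eq u_zero)
  qed
  ultimately show "\<exists>x. (\<exists>i<p * L. x i \<noteq> 0) \<and> (\<forall>j\<in>J1 \<union> J2. (\<Sum>i<p * L. b j i * x i ^ d) = 0)"
    by blast
qed

lemma brauer_field_diag_systems_solvable:
  assumes br: "brauer_field TYPE('k::field)" and d: "d \<ge> 1" and "finite J"
  shows "\<exists>M. \<forall>n>M. diag_systems_solvable TYPE('k) d J n"
  using \<open>finite J\<close>
proof (induction J rule: finite_induct)
  case empty
  then show ?case
    using diag_systems_solvable_empty by blast
next
  case (insert j J)
  then obtain M where M: "\<And>n. n > M \<Longrightarrow> diag_systems_solvable TYPE('k) d J n"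
    by blast
  obtain N where N: "\<And>n. n > N \<Longrightarrow> diag_systems_solvable TYPE('k) d {j} n"
    using br d unfolding brauer_field_iff_diag_systems_solvable_singleton[where j = j] by blast
  have "diag_systems_solvable TYPE('k) d ({j} \<union> J) (Suc M * Suc N)"
    using N M by (intro diag_systems_solvable_union) auto
  then have "diag_systems_solvable TYPE('k) d (insert j J) n" if "n > Suc M * Suc N" for n
    using that d by (auto intro: diag_systems_solvable_mono)
  then show ?case
    by blast
qed

context
  fixes f :: "'k::field \<Rightarrow> 'K::field"
  assumes hom: "field_hom f"
begin

lemma field_hom_add: "f (x + y) = f x + f y"
  using hom unfolding field_hom_def by blast

lemma field_hom_mult: "f (x * y) = f x * f y"
  using hom unfolding field_hom_def by blast

lemma field_hom_zero: "f 0 = 0"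
  using field_hom_add[of 0 0] by (metis add_cancel_right_right)

lemma field_hom_power: "f (x ^ n) = f x ^ n"
  using hom by (induction n) (simp_all add: field_hom_def field_hom_mult)

lemma field_hom_sum: "f (sum g A) = (\<Sum>a\<in>A. f (g a))"
  by (induction A rule: infinite_finite_induct) (simp_all add: field_hom_zero field_hom_add)

lemma field_hom_eq_0_iff: "f x = 0 \<longleftrightarrow> x = 0"
proof
  assume "f x = 0"
  show "x = 0"
  proof (rule ccontr)
    assume "x \<noteq> 0"
    then have "f x * f (inverse x) = 1"
      using hom by (simp add: field_hom_def flip: field_hom_mult)
    with \<open>f x = 0\<close> show False by simp
  qed
qed (simp add: field_hom_zero)

lemma diag_systems_solvable_extension:
  assumes span: "\<And>v. \<exists>c. v = (\<Sum>b\<in>B. f (c b) * b)"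
    and sol: "diag_systems_solvable TYPE('k) d B n"
  shows "diag_systems_solvable TYPE('K) d {()} n"
  unfolding diag_systems_solvable_def
proof
  fix a :: "unit \<Rightarrow> nat \<Rightarrow> 'K"
  have "\<forall>i. \<exists>ci. a () i = (\<Sum>b\<in>B. f (ci b) * b)"
    using span by blast
  then obtain c where c: "\<And>i. a () i = (\<Sum>b\<in>B. f (c i b) * b)"
    by (auto dest: choice)
  obtain t where t_nz: "\<exists>i<n. t i \<noteq> 0" and t_zero: "\<And>b. b \<in> B \<Longrightarrow> (\<Sum>i<n. c i b * t i ^ d) = 0"
    using sol unfolding diag_systems_solvable_def by (elim allE[of _ "\<lambda>b i. c i b"]) blast
  have "(\<Sum>i<n. a () i * f (t i) ^ d) = (\<Sum>i<n. \<Sum>b\<in>B. f (c i b) * b * f (t i) ^ d)"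
    by (simp add: c sum_distrib_right)
  also have "\<dots> = (\<Sum>i<n. \<Sum>b\<in>B. f (c i b * t i ^ d) * b)"
    by (intro sum.cong refl) (simp add: field_hom_mult field_hom_power mult_ac)
  also have "\<dots> = (\<Sum>b\<in>B. f (\<Sum>i<n. c i b * t i ^ d) * b)"
    by (subst sum.swap) (simp add: field_hom_sum sum_distrib_right)
  also have "\<dots> = 0"
    by (simp add: t_zero field_hom_zero)
  finally show "\<exists>x. (\<exists>i<n. x i \<noteq> 0) \<and> (\<forall>j\<in>{()}. (\<Sum>i<n. a j i * x i ^ d) = 0)"
    using t_nz field_hom_eq_0_iff by (intro exI[of _ "\<lambda>i. f (t i)"]) auto
qed

end

theorem proposition2p7:
  fixes f :: "'k::field \<Rightarrow> 'K::field"
  assumes "brauer_field TYPE('k)"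
    and "finite_extension f"
  shows "brauer_field TYPE('K)"
proof -
  obtain B :: "'K set" where hom: "field_hom f" and "finite B"
    and span: "\<And>v. \<exists>c. v = (\<Sum>b\<in>B. f (c b) * b)"
    using assms(2) unfolding finite_extension_def by blast
  have "\<exists>M. \<forall>n>M. diag_systems_solvable TYPE('K) d {()} n" if "d \<ge> 1" for d
    using brauer_field_diag_systems_solvable[OF assms(1) that \<open>finite B\<close>]
      diag_systems_solvable_extension[OF hom span] by blast
  then show ?thesis
    unfolding brauer_field_iff_diag_systems_solvable_singleton[where j = "()"] by blast
qed

end
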